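(* Let $\Re$ be a commutative Krasner hyperring with identity $1\ne0$, $\phi:L(\Re)\to L(\Re)\cup\{\emptyset\}$ a function, and $T$ a proper $\phi$-primary hyperideal of $\Re$. If $T$ is not primary, then $T^2\subseteq\phi(T)$. Equivalently, if $T^2\not\subseteq\phi(T)$ then $T$ is primary.
   Context: Krasner hyperring: $(\Re,\oplus)$ canonical hypergroup, $(\Re,\circ)$ commutative semigroup with identity $1\ne0$, $0$ absorbing, distributive. Hyperideals and $L(\Re)$ as usual; $T^2$ is the hyperideal generated by $\{a\circ b:a,b\in T\}$. $T$ is primary if $a\circ b\in T$ implies $a\in T$ or $b^k\in T$ for some $k\in\mathbb{N}$; $T$ is $\phi$-primary if $a\circ b\in T$, $a\circ b\notin\phi(T)$ imply $a\in T$ or $b^k\in T$ for some $k\in\mathbb{N}$. *)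

theory Defs
  imports Main
begin

definition hsum :: "('a \<Rightarrow> 'a \<Rightarrow> 'a set) \<Rightarrow> 'a set \<Rightarrow> 'a set \<Rightarrow> 'a set" where
  "hsum add A B = (\<Union>a\<in>A. \<Union>b\<in>B. add a b)"

definition krasner_hyperring ::
  "'a set \<Rightarrow> ('a \<Rightarrow> 'a \<Rightarrow> 'a set) \<Rightarrow> ('a \<Rightarrow> 'a \<Rightarrow> 'a) \<Rightarrow> 'a \<Rightarrow> 'a \<Rightarrow> ('a \<Rightarrow> 'a) \<Rightarrow> bool" where
  "krasner_hyperring R add mul zero one neg \<longleftrightarrow>
     \<comment> \<open>(R, add) is a canonical hypergroup\<close>
     (\<forall>x\<in>R. \<forall>y\<in>R. add x y \<noteq> {} \<and> add x y \<subseteq> R) \<and>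
     (\<forall>x\<in>R. \<forall>y\<in>R. \<forall>z\<in>R. hsum add (add x y) {z} = hsum add {x} (add y z)) \<and>
     (\<forall>x\<in>R. \<forall>y\<in>R. add x y = add y x) \<and>
     zero \<in> R \<and> (\<forall>x\<in>R. add x zero = {x}) \<and>
     (\<forall>x\<in>R. neg x \<in> R \<and> zero \<in> add x (neg x) \<and>
        (\<forall>y\<in>R. zero \<in> add x y \<longrightarrow> y = neg x)) \<and>
     (\<forall>x\<in>R. \<forall>y\<in>R. \<forall>z\<in>R. z \<in> add x y \<longrightarrow> y \<in> add (neg x) z \<and> x \<in> add z (neg y)) \<and>
     \<comment> \<open>(R, mul) is a commutative semigroup with identity one \<noteq> zero\<close>
     (\<forall>x\<in>R. \<forall>y\<in>R. mul x y \<in> R) \<and>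
     (\<forall>x\<in>R. \<forall>y\<in>R. \<forall>z\<in>R. mul (mul x y) z = mul x (mul y z)) \<and>
     (\<forall>x\<in>R. \<forall>y\<in>R. mul x y = mul y x) \<and>
     one \<in> R \<and> one \<noteq> zero \<and> (\<forall>x\<in>R. mul one x = x) \<and>
     \<comment> \<open>zero is absorbing\<close>
     (\<forall>x\<in>R. mul zero x = zero) \<and>
     \<comment> \<open>distributivity\<close>
     (\<forall>x\<in>R. \<forall>y\<in>R. \<forall>z\<in>R. mul z ` add x y = add (mul z x) (mul z y))"

definition hyperideal ::
  "'a set \<Rightarrow> ('a \<Rightarrow> 'a \<Rightarrow> 'a set) \<Rightarrow> ('a \<Rightarrow> 'a \<Rightarrow> 'a) \<Rightarrow> ('a \<Rightarrow> 'a) \<Rightarrow> 'a set \<Rightarrow> bool" where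
  "hyperideal R add mul neg I \<longleftrightarrow>
     I \<noteq> {} \<and> I \<subseteq> R \<and>
     (\<forall>a\<in>I. \<forall>b\<in>I. add a (neg b) \<subseteq> I) \<and>
     (\<forall>a\<in>I. \<forall>r\<in>R. mul r a \<in> I)"

definition hideals where
  "hideals R add mul neg = {I. hyperideal R add mul neg I}"

definition hgen where
  "hgen R add mul neg S = \<Inter>{I. hyperideal R add mul neg I \<and> S \<subseteq> I}"

definition hsquare where
  "hsquare R add mul neg T = hgen R add mul neg {mul a b | a b. a \<in> T \<and> b \<in> T}"

fun hpow :: "('a \<Rightarrow> 'a \<Rightarrow> 'a) \<Rightarrow> 'a \<Rightarrow> 'a \<Rightarrow> nat \<Rightarrow> 'a" where
  "hpow mul one b 0 = one"
| "hpow mul one b (Suc k) = mul b (hpow mul one b k)"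

definition primary_hideal where
  "primary_hideal R add mul one neg T \<longleftrightarrow>
     hyperideal R add mul neg T \<and>
     (\<forall>a\<in>R. \<forall>b\<in>R. mul a b \<in> T \<longrightarrow> a \<in> T \<or> (\<exists>k>0. hpow mul one b k \<in> T))"

definition phi_primary_hideal where
  "phi_primary_hideal R add mul one neg phi T \<longleftrightarrow>
     hyperideal R add mul neg T \<and>
     (\<forall>a\<in>R. \<forall>b\<in>R. mul a b \<in> T \<longrightarrow> mul a b \<notin> phi T \<longrightarrow>
        a \<in> T \<or> (\<exists>k>0. hpow mul one b k \<in> T))"

end

theory Submission
  imports Defs
begin

text \<open>Since T is not primary, there are a, b with ab \<in> T, a \<notin> T and no power of b in T;
  then ab \<in> \<phi>(T), so \<phi>(T) is a hyperideal. For x, y \<in> T every element c of a + x still lies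
  outside T and every element d of b + y still has no power in T, so the products cb, ad, cd,
  which lie in T, are forced into \<phi>(T) by \<phi>-primality. Expanding them by distributivity and
  cancelling the summands already known to lie in \<phi>(T) gives bx, ay and finally xy \<in> \<phi>(T).
  Hence \<phi>(T) contains all generators of T^2.\<close>

lemma phi_primary_hidealD:
  assumes "phi_primary_hideal R add mul one neg phi T"
    and "u \<in> R" "v \<in> R" "mul u v \<in> T" "u \<notin> T" "\<forall>k>0. hpow mul one v k \<notin> T"
  shows "mul u v \<in> phi T"
  using assms unfolding phi_primary_hideal_def by blast

lemma hsquare_subset:
  assumes "hyperideal R add mul neg P" and "\<And>x y. x \<in> T \<Longrightarrow> y \<in> T \<Longrightarrow> mul x y \<in> P"
  shows "hsquare R add mul neg T \<subseteq> P"
  using assms unfolding hsquare_def hgen_def by blast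

locale comm_krasner_hyperring =
  fixes R :: "'a set" and add :: "'a \<Rightarrow> 'a \<Rightarrow> 'a set" and mul :: "'a \<Rightarrow> 'a \<Rightarrow> 'a"
    and zero one :: 'a and neg :: "'a \<Rightarrow> 'a"
  assumes krasner: "krasner_hyperring R add mul zero one neg"
begin

abbreviation hideal :: "'a set \<Rightarrow> bool" where
  "hideal I \<equiv> hyperideal R add mul neg I"

lemma add_nonempty: "x \<in> R \<Longrightarrow> y \<in> R \<Longrightarrow> add x y \<noteq> {}"
  using krasner unfolding krasner_hyperring_def by metis

lemma add_closed: "x \<in> R \<Longrightarrow> y \<in> R \<Longrightarrow> add x y \<subseteq> R"
  using krasner unfolding krasner_hyperring_def by metis

lemma add_assoc:
  "x \<in> R \<Longrightarrow> y \<in> R \<Longrightarrow> z \<in> R \<Longrightarrow> hsum add (add x y) {z} = hsum add {x} (add y z)"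
  using krasner unfolding krasner_hyperring_def by metis

lemma add_commute: "x \<in> R \<Longrightarrow> y \<in> R \<Longrightarrow> add x y = add y x"
  using krasner unfolding krasner_hyperring_def by metis

lemma zero_closed: "zero \<in> R"
  using krasner unfolding krasner_hyperring_def by metis

lemma add_zero: "x \<in> R \<Longrightarrow> add x zero = {x}"
  using krasner unfolding krasner_hyperring_def by metis

lemma neg_closed: "x \<in> R \<Longrightarrow> neg x \<in> R"
  using krasner unfolding krasner_hyperring_def by metis

lemma zero_in_add_neg: "x \<in> R \<Longrightarrow> zero \<in> add x (neg x)"
  using krasner unfolding krasner_hyperring_def by metis

lemma neg_unique: "x \<in> R \<Longrightarrow> y \<in> R \<Longrightarrow> zero \<in> add x y \<Longrightarrow> y = neg x"
  using krasner unfolding krasner_hyperring_def by metis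

lemma add_reversible_left:
  "x \<in> R \<Longrightarrow> y \<in> R \<Longrightarrow> z \<in> R \<Longrightarrow> z \<in> add x y \<Longrightarrow> y \<in> add (neg x) z"
  using krasner unfolding krasner_hyperring_def by metis

lemma add_reversible_right:
  "x \<in> R \<Longrightarrow> y \<in> R \<Longrightarrow> z \<in> R \<Longrightarrow> z \<in> add x y \<Longrightarrow> x \<in> add z (neg y)"
  using krasner unfolding krasner_hyperring_def by metis

lemma mul_closed: "x \<in> R \<Longrightarrow> y \<in> R \<Longrightarrow> mul x y \<in> R"
  using krasner unfolding krasner_hyperring_def by metis

lemma mul_commute: "x \<in> R \<Longrightarrow> y \<in> R \<Longrightarrow> mul x y = mul y x"
  using krasner unfolding krasner_hyperring_def by metis

lemma one_closed: "one \<in> R"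
  using krasner unfolding krasner_hyperring_def by metis

lemma mul_one_left: "x \<in> R \<Longrightarrow> mul one x = x"
  using krasner unfolding krasner_hyperring_def by metis

lemma zero_mul: "x \<in> R \<Longrightarrow> mul zero x = zero"
  using krasner unfolding krasner_hyperring_def by metis

lemma distrib: "x \<in> R \<Longrightarrow> y \<in> R \<Longrightarrow> z \<in> R \<Longrightarrow> mul z ` add x y = add (mul z x) (mul z y)"
  using krasner unfolding krasner_hyperring_def by metis

lemma distrib_mem:
  "x \<in> R \<Longrightarrow> y \<in> R \<Longrightarrow> z \<in> R \<Longrightarrow> c \<in> add x y \<Longrightarrow> mul z c \<in> add (mul z x) (mul z y)"
  using distrib by blast

lemma mul_zero: "x \<in> R \<Longrightarrow> mul x zero = zero"
  using mul_commute zero_mul zero_closed by metis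

lemma neg_neg: "x \<in> R \<Longrightarrow> neg (neg x) = x"
  by (metis add_commute neg_closed zero_in_add_neg neg_unique)

lemma mul_neg_one: "x \<in> R \<Longrightarrow> mul x (neg one) = neg x"
proof -
  assume x: "x \<in> R"
  have "zero \<in> add (mul x one) (mul x (neg one))"
    using distrib_mem[OF one_closed neg_closed[OF one_closed] x zero_in_add_neg[OF one_closed]]
      mul_zero[OF x] by simp
  then show ?thesis
    using x one_closed neg_closed mul_closed mul_commute mul_one_left neg_unique by metis
qed

lemma hpow_closed: "b \<in> R \<Longrightarrow> hpow mul one b k \<in> R"
  by (induction k) (auto simp: one_closed mul_closed)

lemma hyperideal_subset: "hideal I \<Longrightarrow> I \<subseteq> R"
  unfolding hyperideal_def by blast

lemma hyperideal_mul_left: "hideal I \<Longrightarrow> p \<in> I \<Longrightarrow> r \<in> R \<Longrightarrow> mul r p \<in> I"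
  unfolding hyperideal_def by blast

lemma hyperideal_mul_right: "hideal I \<Longrightarrow> p \<in> I \<Longrightarrow> r \<in> R \<Longrightarrow> mul p r \<in> I"
  using hyperideal_mul_left hyperideal_subset mul_commute by (metis subsetD)

lemma hyperideal_neg: "hideal I \<Longrightarrow> p \<in> I \<Longrightarrow> neg p \<in> I"
  using hyperideal_mul_right hyperideal_subset mul_neg_one neg_closed one_closed
  by (metis subsetD)

lemma hyperideal_add: "hideal I \<Longrightarrow> p \<in> I \<Longrightarrow> q \<in> I \<Longrightarrow> add p q \<subseteq> I"
proof -
  assume I: "hideal I" and p: "p \<in> I" and q: "q \<in> I"
  have "add p (neg (neg q)) \<subseteq> I"
    using I p hyperideal_neg[OF I q] unfolding hyperideal_def by blast
  then show ?thesis using neg_neg hyperideal_subset I q by (metis subsetD)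
qed

lemma hyperideal_zero: "hideal I \<Longrightarrow> zero \<in> I"
proof -
  assume I: "hideal I"
  then obtain p where p: "p \<in> I" unfolding hyperideal_def by blast
  then have "add p (neg p) \<subseteq> I" using I unfolding hyperideal_def by blast
  then show ?thesis using zero_in_add_neg hyperideal_subset I p by blast
qed

lemma hyperideal_cancel:
  assumes I: "hideal I" and p: "p \<in> I" and z: "z \<in> I" and y: "y \<in> R" and zy: "z \<in> add p y"
  shows "y \<in> I"
proof -
  have "p \<in> R" "z \<in> R" using p z hyperideal_subset[OF I] by auto
  then have "y \<in> add (neg p) z" using add_reversible_left y zy by blast
  moreover have "add (neg p) z \<subseteq> I" using hyperideal_add[OF I hyperideal_neg[OF I p] z] .
  ultimately show ?thesis by blast
qed

lemma add_notin_hyperideal: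
  assumes I: "hideal I" and a: "a \<in> R" "a \<notin> I" and x: "x \<in> I" and c: "c \<in> add a x"
  shows "c \<notin> I"
proof
  assume cI: "c \<in> I"
  have xR: "x \<in> R" using x hyperideal_subset[OF I] by blast
  have "a \<in> add c (neg x)"
    using add_reversible_right[OF a(1) xR _ c] c add_closed[OF a(1) xR] by blast
  moreover have "add c (neg x) \<subseteq> I" using hyperideal_add[OF I cI hyperideal_neg[OF I x]] .
  ultimately show False using a(2) by blast
qed

lemma hyperideal_mul_sum:
  assumes I: "hideal I" and "x \<in> R" "y \<in> R" "z \<in> R" "c \<in> add x y"
    and zx: "mul z x \<in> I" and zy: "mul z y \<in> I"
  shows "mul z c \<in> I"
  using distrib_mem[OF assms(2-5)] hyperideal_add[OF I zx zy] by blast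

lemma hyperideal_mul_sum_cancel:
  assumes I: "hideal I" and "x \<in> R" "y \<in> R" "z \<in> R" "c \<in> add x y"
    and zx: "mul z x \<in> I" and zc: "mul z c \<in> I"
  shows "mul z y \<in> I"
  using hyperideal_cancel[OF I zx zc mul_closed[OF assms(4,3)] distrib_mem[OF assms(2-5)]] .

text \<open>Powers are well defined modulo a hyperideal: b^k \<in> d^k + I whenever d \<in> b + I.\<close>

lemma hpow_perturb:
  assumes I: "hideal I" and b: "b \<in> R" and y: "y \<in> I" and d: "d \<in> add b y"
  shows "\<exists>t\<in>I. hpow mul one b k \<in> add (hpow mul one d k) t"
proof (induction k)
  case 0
  show ?case using hyperideal_zero[OF I] add_zero[OF one_closed] by auto
next
  case (Suc k)
  have yR: "y \<in> R" using I y hyperideal_subset by blast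
  have dR: "d \<in> R" using add_closed[OF b yR] d by blast
  define B where "B = hpow mul one b k"
  define D where "D = hpow mul one d k"
  have BR: "B \<in> R" and DR: "D \<in> R" using hpow_closed b dR B_def D_def by auto
  from Suc obtain t where t: "t \<in> I" and "B \<in> add D t" unfolding B_def D_def by blast
  have tR: "t \<in> R" using t I hyperideal_subset by blast
  have bB: "mul b B \<in> add (mul b D) (mul b t)" using distrib_mem[OF DR tR b \<open>B \<in> add D t\<close>] .
  have "mul D b \<in> add (mul D d) (mul D (neg y))"
    using distrib_mem[OF dR neg_closed[OF yR] DR add_reversible_right[OF b yR dR d]] .
  then have bD: "mul b D \<in> add (mul D d) (mul D (neg y))" using mul_commute[OF b DR] by simp
  have "mul b B \<in> hsum add (add (mul D d) (mul D (neg y))) {mul b t}"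
    using bB bD unfolding hsum_def by blast
  also have "\<dots> = hsum add {mul D d} (add (mul D (neg y)) (mul b t))"
    using add_assoc mul_closed DR dR neg_closed yR b tR by simp
  finally obtain t' where t': "t' \<in> add (mul D (neg y)) (mul b t)"
    and m: "mul b B \<in> add (mul D d) t'" unfolding hsum_def by blast
  have "t' \<in> I"
    using t' hyperideal_add[OF I hyperideal_mul_left[OF I hyperideal_neg[OF I y] DR]
        hyperideal_mul_left[OF I t b]] by blast
  moreover have "mul D d = hpow mul one d (Suc k)" using D_def mul_commute[OF DR dR] by simp
  ultimately show ?case using m B_def by auto
qed

lemma hpow_notin_perturb:
  assumes I: "hideal I" and b: "b \<in> R" "\<forall>k>0. hpow mul one b k \<notin> I"
    and y: "y \<in> I" and d: "d \<in> add b y"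
  shows "\<forall>k>0. hpow mul one d k \<notin> I"
proof (intro allI impI notI)
  fix k :: nat assume "k > 0" and dk: "hpow mul one d k \<in> I"
  obtain t where "t \<in> I" and "hpow mul one b k \<in> add (hpow mul one d k) t"
    using hpow_perturb[OF I b(1) y d] by blast
  then have "hpow mul one b k \<in> I" using hyperideal_add[OF I dk] by blast
  with b(2) \<open>k > 0\<close> show False by blast
qed

context
  fixes phi :: "'a set \<Rightarrow> 'a set" and T :: "'a set" and a b :: 'a
  assumes phi_primary: "phi_primary_hideal R add mul one neg phi T"
    and phi_hideal: "hideal (phi T)"
    and a: "a \<in> R" "a \<notin> T" and b: "b \<in> R" "\<forall>k>0. hpow mul one b k \<notin> T"
    and ab: "mul a b \<in> T"
begin

private lemma T_hideal: "hideal T"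
  using phi_primary unfolding phi_primary_hideal_def by blast

private lemma ab_phi: "mul a b \<in> phi T"
  using phi_primary_hidealD[OF phi_primary a(1) b(1) ab a(2) b(2)] .

private lemma witness_sum_mul_mem:
  assumes x: "x \<in> T" and c: "c \<in> add a x"
  shows "mul b c \<in> T"
proof -
  have xR: "x \<in> R" using x hyperideal_subset[OF T_hideal] by blast
  have "mul b a \<in> T" using ab mul_commute[OF a(1) b(1)] by simp
  then show ?thesis
    by (rule hyperideal_mul_sum[OF T_hideal a(1) xR b(1) c _ hyperideal_mul_left[OF T_hideal x b(1)]])
qed

lemma witness_sum_mul_in_phi:
  assumes x: "x \<in> T" and c: "c \<in> add a x"
  shows "mul c b \<in> phi T"
proof -
  have xR: "x \<in> R" using x hyperideal_subset[OF T_hideal] by blast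
  have cR: "c \<in> R" using c add_closed[OF a(1) xR] by blast
  show ?thesis
    using phi_primary_hidealD[OF phi_primary cR b(1) _ add_notin_hyperideal[OF T_hideal a x c] b(2)]
      witness_sum_mul_mem[OF x c] mul_commute[OF b(1) cR] by simp
qed

lemma witness_mul_in_phi:
  assumes y: "y \<in> T"
  shows "mul a y \<in> phi T"
proof -
  have yR: "y \<in> R" using y hyperideal_subset[OF T_hideal] by blast
  obtain d where d: "d \<in> add b y" using add_nonempty[OF b(1) yR] by blast
  have dR: "d \<in> R" using d add_closed[OF b(1) yR] by blast
  have "mul a d \<in> T"
    using hyperideal_mul_sum[OF T_hideal b(1) yR a(1) d ab hyperideal_mul_left[OF T_hideal y a(1)]] .
  then have "mul a d \<in> phi T"
    using phi_primary_hidealD[OF phi_primary a(1) dR _ a(2)]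
      hpow_notin_perturb[OF T_hideal b y d] by blast
  then show ?thesis by (rule hyperideal_mul_sum_cancel[OF phi_hideal b(1) yR a(1) d ab_phi])
qed

lemma square_generators_in_phi:
  assumes x: "x \<in> T" and y: "y \<in> T"
  shows "mul x y \<in> phi T"
proof -
  have xR: "x \<in> R" and yR: "y \<in> R" using x y hyperideal_subset[OF T_hideal] by auto
  obtain c where c: "c \<in> add a x" using add_nonempty[OF a(1) xR] by blast
  have cR: "c \<in> R" using c add_closed[OF a(1) xR] by blast
  obtain d where d: "d \<in> add b y" using add_nonempty[OF b(1) yR] by blast
  have dR: "d \<in> R" using d add_closed[OF b(1) yR] by blast
  have "mul c b \<in> T" using witness_sum_mul_mem[OF x c] mul_commute[OF b(1) cR] by simp
  then have "mul c d \<in> T"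
    by (rule hyperideal_mul_sum[OF T_hideal b(1) yR cR d _ hyperideal_mul_left[OF T_hideal y cR]])
  then have "mul c d \<in> phi T"
    using phi_primary_hidealD[OF phi_primary cR dR _ add_notin_hyperideal[OF T_hideal a x c]]
      hpow_notin_perturb[OF T_hideal b y d] by blast
  then have "mul c y \<in> phi T"
    by (rule hyperideal_mul_sum_cancel[OF phi_hideal b(1) yR cR d witness_sum_mul_in_phi[OF x c]])
  then have "mul y c \<in> phi T" using mul_commute[OF cR yR] by simp
  moreover have "mul y a \<in> phi T" using witness_mul_in_phi[OF y] mul_commute[OF a(1) yR] by simp
  ultimately have "mul y x \<in> phi T"
    using hyperideal_mul_sum_cancel[OF phi_hideal a(1) xR yR c] by blast
  then show ?thesis using mul_commute[OF xR yR] by simp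
qed

end

end

theorem mainTheorem12:
  fixes R :: "'a set" and add :: "'a \<Rightarrow> 'a \<Rightarrow> 'a set" and mul :: "'a \<Rightarrow> 'a \<Rightarrow> 'a"
    and zero one :: 'a and neg :: "'a \<Rightarrow> 'a" and phi :: "'a set \<Rightarrow> 'a set" and T :: "'a set"
  assumes "krasner_hyperring R add mul zero one neg"
    and "\<forall>I \<in> hideals R add mul neg. phi I \<in> hideals R add mul neg \<union> {{}}"
    and "T \<noteq> R"
    and "phi_primary_hideal R add mul one neg phi T"
    and "\<not> primary_hideal R add mul one neg T"
  shows "hsquare R add mul neg T \<subseteq> phi T"
proof -
  interpret comm_krasner_hyperring R add mul zero one neg
    by (rule comm_krasner_hyperring.intro[OF assms(1)])
  have T: "hyperideal R add mul neg T"
    using assms(4) unfolding phi_primary_hideal_def by blast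
  obtain a b where a: "a \<in> R" "a \<notin> T" and b: "b \<in> R" "\<forall>k>0. hpow mul one b k \<notin> T"
    and ab: "mul a b \<in> T"
    using assms(5) T unfolding primary_hideal_def by blast
  have "mul a b \<in> phi T" using phi_primary_hidealD[OF assms(4) a(1) b(1) ab a(2) b(2)] .
  moreover have "phi T \<in> hideals R add mul neg \<union> {{}}"
    using assms(2) T unfolding hideals_def by blast
  ultimately have phi: "hyperideal R add mul neg (phi T)" unfolding hideals_def by blast
  show ?thesis
    using hsquare_subset[OF phi square_generators_in_phi[OF assms(4) phi a b ab]] .
qed

end
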